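(* Let $d\ge 1$ and $1\le q\le d$. Let $\mathbf{w}_1,\dots,\mathbf{w}_q$ be independent random vectors, each uniformly distributed on the unit sphere $S^{d-1}\subset\mathbb{R}^d$, and let $\{\mathbf{u}_1,\dots,\mathbf{u}_q\}$ be the orthonormal set obtained from them by Gram–Schmidt orthogonalization. Let $\mathbf{g}\in\mathbb{R}^d$ be a fixed nonzero vector, $\overline{\mathbf{g}}=\mathbf{g}/\|\mathbf{g}\|$, $\mathbf{v}:=\sum_{i=1}^q \operatorname{sign}(\mathbf{g}^\top\mathbf{u}_i)\,\mathbf{u}_i$ and $\overline{\mathbf{v}}=\mathbf{v}/\|\mathbf{v}\|$. Then $$\mathbb{E}\big[(\overline{\mathbf{g}}^\top\overline{\mathbf{v}})^2\big]=\frac{1}{d}\left(\frac{2}{\pi}(q-1)+1\right).$$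
   Context: $\operatorname{sign}(a)=+1$ if $a>0$, $-1$ if $a<0$ (ties occur with probability zero). $\|\cdot\|$ is the Euclidean norm. *)

theory Defs
  imports "HOL-Probability.Probability"
begin

text \<open>Uniform (normalized surface) measure on the unit sphere of a Euclidean space,
  defined as the cone measure: push-forward of the uniform distribution on the open unit
  ball under radial projection x \<mapsto> x / norm x.\<close>
definition sphere_uniform :: "'a::euclidean_space measure" where
  "sphere_uniform = distr (uniform_measure lborel (ball 0 1)) borel (\<lambda>x. x /\<^sub>R norm x)"

fun gram_schmidt_list :: "(nat \<Rightarrow> 'a::real_inner) \<Rightarrow> nat \<Rightarrow> 'a list" where
  "gram_schmidt_list w 0 = []"
| "gram_schmidt_list w (Suc k) =
     (let us = gram_schmidt_list w k;
          y = w k - sum_list (map (\<lambda>u. (w k \<bullet> u) *\<^sub>R u) us)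
      in us @ [y /\<^sub>R norm y])"

end

theory Submission
  imports Defs
begin

(* The joint law of w_1, ..., w_q is invariant under rotations and Gram-Schmidt commutes with them,
   so the expectation does not depend on the unit vector g / |g| and may be replaced by its average
   over a direction c that is itself uniform on the sphere; by Fubini it then suffices to integrate
   over c for fixed w.
   Almost surely the u_i are orthonormal and no c . u_i vanishes, and then the integrand equals
   (sum_i |c . u_i|)^2 / q.  The diagonal terms give E (c . u)^2 = 1/d, because the d coordinates
   of a unit vector have equal second moments summing to 1.  For an off-diagonal pair u, u',
   averaging over the rotations by an angle t in the plane of u and u' does not change
   E |c . u| |c . u'| and turns the integrand into ((c . u)^2 + (c . u')^2) / pi, whence
   E |c . u| |c . u'| = 2 / (pi d). *)

section \<open>Rotation invariance of Lebesgue measure\<close>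

text \<open>The change-of-variables results of HOL-Analysis require a \<open>wellorder\<close> index type;
  they are transferred to \<open>real^'a\<close> through the wellordered copy \<open>'a fin_index\<close> of \<open>'a\<close>.\<close>

typedef ('a::finite) fin_index = "{..<CARD('a)}"
  by (rule exI[of _ 0]) simp

instance fin_index :: (finite) finite
  by standard (metis finite_imageI finite_lessThan type_definition.univ type_definition_fin_index)

instantiation fin_index :: (finite) linorder
begin
definition less_eq_fin_index :: "'a fin_index \<Rightarrow> 'a fin_index \<Rightarrow> bool" where
  "less_eq_fin_index x y \<longleftrightarrow> Rep_fin_index x \<le> Rep_fin_index y"
definition less_fin_index :: "'a fin_index \<Rightarrow> 'a fin_index \<Rightarrow> bool" where
  "less_fin_index x y \<longleftrightarrow> Rep_fin_index x < Rep_fin_index y"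
instance
  by standard (auto simp: less_eq_fin_index_def less_fin_index_def Rep_fin_index_inject)
end

instance fin_index :: (finite) wellorder
proof
  fix P :: "'a fin_index \<Rightarrow> bool" and a :: "'a fin_index"
  assume step: "\<And>x. (\<And>y. y < x \<Longrightarrow> P y) \<Longrightarrow> P x"
  have "\<forall>x. Rep_fin_index x = n \<longrightarrow> P x" for n
    by (induction n rule: less_induct) (metis step less_fin_index_def)
  then show "P a" by blast
qed

lemma card_fin_index: "CARD('a::finite fin_index) = CARD('a)"
  using type_definition.card[OF type_definition_fin_index] by simp

lemma borel_measurable_linear:
  "linear f \<Longrightarrow> (f :: 'a::euclidean_space \<Rightarrow> 'b::euclidean_space) \<in> borel_measurable borel"
  by (intro borel_measurable_continuous_onI linear_continuous_on) (simp add: linear_conv_bounded_linear)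

lemma borel_measurable_orthogonal_transformation:
  "orthogonal_transformation f \<Longrightarrow> (f :: 'a::euclidean_space \<Rightarrow> 'a) \<in> borel_measurable borel"
  by (simp add: borel_measurable_linear orthogonal_transformation_linear)

lemma prod_Basis_vec: "(\<Prod>b\<in>Basis. (x::real^'n) \<bullet> b) = (\<Prod>i\<in>UNIV. x $ i)"
proof -
  have Basis: "(Basis :: (real^'n) set) = range (\<lambda>i. axis i 1)"
    by (auto simp: Basis_vec_def)
  have "inj (\<lambda>i::'n. axis i (1::real))"
    by (auto simp: inj_def axis_eq_axis)
  then show ?thesis
    unfolding Basis by (simp add: prod.reindex inner_axis)
qed

lemma distr_lborel_orthogonal_transformation_wellorder:
  fixes f :: "real^'n::{finite,wellorder} \<Rightarrow> real^'n::_"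
  assumes f: "orthogonal_transformation f"
  shows "distr lborel borel f = lborel"
proof (rule lborel_eqI[symmetric])
  fix l u :: "(real, 'n) vec"
  let ?B = "box l u" and ?f' = "inv f"
  have f': "orthogonal_transformation ?f'"
    by (rule orthogonal_transformation_inv[OF f])
  have B: "?B \<in> lmeasurable"
    by (simp add: bounded_set_imp_lmeasurable)
  have preimage: "f -` ?B = ?f' ` ?B"
    by (rule bij_vimage_eq_inv_image) (use f orthogonal_transformation_bij in blast)
  have "?f' ` ?B \<in> sets borel"
    using measurable_sets_borel[of f borel ?B] f preimage
    by (simp add: borel_measurable_orthogonal_transformation)
  then have "emeasure (distr lborel borel f) ?B = emeasure lebesgue (?f' ` ?B)"
    using f preimage by (simp add: emeasure_distr borel_measurable_orthogonal_transformation)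
  also have "\<dots> = emeasure lebesgue ?B"
    using B measurable_orthogonal_image[OF f' B]
    by (simp add: emeasure_eq_measure2 measure_orthogonal_image[OF f' B])
  also have "\<dots> = emeasure lborel ?B"
    by simp
  finally show "emeasure (distr lborel borel f) ?B = (\<Prod>b\<in>Basis. (u - l) \<bullet> b)"
    if "\<And>b. b \<in> Basis \<Longrightarrow> l \<bullet> b \<le> u \<bullet> b"
    using that by simp
qed simp

definition vec_reindex :: "('b::finite \<Rightarrow> 'a::finite) \<Rightarrow> 'c^'a \<Rightarrow> 'c^'b" where
  "vec_reindex \<sigma> x = (\<chi> j. x $ \<sigma> j)"

lemma linear_vec_reindex: "linear (vec_reindex \<sigma> :: real^'a::finite \<Rightarrow> real^'b::finite)"
  by (rule linearI) (simp_all add: vec_reindex_def vec_eq_iff)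

lemma vec_reindex_inv:
  assumes "bij \<sigma>"
  shows "vec_reindex (inv \<sigma>) (vec_reindex \<sigma> x) = x"
  using assms by (simp add: vec_reindex_def vec_eq_iff bij_is_surj surj_f_inv_f)

lemma inner_vec_reindex:
  fixes x y :: "real^'a::finite"
  assumes "bij \<sigma>"
  shows "vec_reindex \<sigma> x \<bullet> vec_reindex \<sigma> y = x \<bullet> y"
  using sum.reindex_bij_betw[OF assms, of "\<lambda>i. x $ i * y $ i"]
  by (simp add: inner_vec_def vec_reindex_def)

lemma vimage_vec_reindex_box:
  fixes l u :: "real^'b::finite"
  assumes "bij \<sigma>"
  shows "vec_reindex \<sigma> -` box l u = box (vec_reindex (inv \<sigma>) l) (vec_reindex (inv \<sigma>) u)"
proof -
  have "(\<forall>j. l $ j < x $ \<sigma> j \<and> x $ \<sigma> j < u $ j) \<longleftrightarrow>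
        (\<forall>i. l $ inv \<sigma> i < x $ i \<and> x $ i < u $ inv \<sigma> i)" for x :: "real^'a"
    by (metis assms bij_inv_eq_iff)
  then show ?thesis
    by (auto simp: mem_box_cart vec_reindex_def)
qed

lemma distr_lborel_vec_reindex:
  assumes \<sigma>: "bij (\<sigma> :: 'b::finite \<Rightarrow> 'a::finite)"
  shows "distr lborel borel (vec_reindex \<sigma> :: real^'a \<Rightarrow> real^'b) = lborel"
proof (rule lborel_eqI[symmetric])
  have \<tau>: "bij (inv \<sigma>)"
    using \<sigma> bij_imp_bij_inv by blast
  fix l u :: "real^'b"
  assume le_Basis: "\<And>b. b \<in> Basis \<Longrightarrow> l \<bullet> b \<le> u \<bullet> b"
  have le: "l $ i \<le> u $ i" for i
    using le_Basis[of "axis i 1"] by (auto simp: Basis_vec_def inner_axis)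
  have "emeasure (distr lborel borel (vec_reindex \<sigma>)) (box l u)
      = emeasure lborel (box (vec_reindex (inv \<sigma>) l) (vec_reindex (inv \<sigma>) u))"
    by (simp add: emeasure_distr vimage_vec_reindex_box[OF \<sigma>] borel_measurable_linear linear_vec_reindex)
  also have "\<dots> = (\<Prod>b\<in>Basis. (vec_reindex (inv \<sigma>) u - vec_reindex (inv \<sigma>) l) \<bullet> b)"
    by (rule emeasure_lborel_box) (auto simp: Basis_vec_def inner_axis vec_reindex_def le)
  also have "\<dots> = (\<Prod>i\<in>UNIV. u $ inv \<sigma> i - l $ inv \<sigma> i)"
    by (simp add: prod_Basis_vec vec_reindex_def)
  also have "\<dots> = (\<Prod>b\<in>Basis. (u - l) \<bullet> b)"
    using prod.reindex_bij_betw[OF \<tau>, of "\<lambda>j. u $ j - l $ j"] by (simp add: prod_Basis_vec)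
  finally show "emeasure (distr lborel borel (vec_reindex \<sigma>)) (box l u) = (\<Prod>b\<in>Basis. (u - l) \<bullet> b)" .
qed simp

lemma distr_lborel_orthogonal_transformation:
  fixes f :: "real^'n \<Rightarrow> real^'n"
  assumes f: "orthogonal_transformation f"
  shows "distr lborel borel f = lborel"
proof -
  obtain \<sigma> :: "'n fin_index \<Rightarrow> 'n" where \<sigma>: "bij \<sigma>"
    using finite_same_card_bij[of "UNIV :: 'n fin_index set" "UNIV :: 'n set"] card_fin_index by auto
  have \<tau>: "bij (inv \<sigma>)"
    using \<sigma> bij_imp_bij_inv by blast
  let ?R = "vec_reindex \<sigma> :: real^'n \<Rightarrow> real^'n fin_index"
    and ?R' = "vec_reindex (inv \<sigma>) :: real^'n fin_index \<Rightarrow> real^'n"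
  have R'_R: "?R' (?R x) = x" for x
    by (rule vec_reindex_inv[OF \<sigma>])
  have R_R': "?R (?R' y) = y" for y
    using vec_reindex_inv[OF \<tau>] \<sigma> by (simp add: inv_inv_eq)
  have [measurable]: "?R \<in> borel_measurable borel" "?R' \<in> borel_measurable borel"
    by (simp_all add: borel_measurable_linear linear_vec_reindex)
  define g where "g = ?R \<circ> f \<circ> ?R'"
  have g: "orthogonal_transformation g"
    using f unfolding g_def orthogonal_transformation_def
    by (auto intro!: linear_compose linear_vec_reindex simp: inner_vec_reindex[OF \<sigma>] inner_vec_reindex[OF \<tau>])
  have [measurable]: "g \<in> borel_measurable borel" "f \<in> borel_measurable borel"
    using f g by (simp_all add: borel_measurable_orthogonal_transformation)
  have "f = ?R' \<circ> g \<circ> ?R"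
    by (simp add: g_def fun_eq_iff R'_R)
  then have "distr lborel borel f = distr (distr (distr lborel borel ?R) borel g) borel ?R'"
    by (simp add: distr_distr comp_assoc)
  also have "\<dots> = distr (distr lborel borel ?R) borel ?R'"
    by (simp add: distr_lborel_vec_reindex \<sigma> distr_lborel_orthogonal_transformation_wellorder[OF g])
  also have "\<dots> = distr lborel borel (?R' \<circ> ?R)"
    by (rule distr_distr) simp_all
  also have "\<dots> = lborel"
    by (simp add: comp_def R'_R distr_id2)
  finally show ?thesis .
qed

section \<open>The uniform distribution on the sphere\<close>

lemma prob_space_uniform_ball: "prob_space (uniform_measure lborel (ball (0::'a::euclidean_space) 1))"
proof (rule prob_space_uniform_measure)
  show "emeasure lborel (ball (0::'a) 1) \<noteq> 0"
    using unit_ball_vol_pos[of "real DIM('a)"] by (auto simp: emeasure_ball simp del: unit_ball_vol_pos)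
  show "emeasure lborel (ball (0::'a) 1) \<noteq> \<infinity>"
    using emeasure_lborel_ball_finite by (metis less_irrefl)
qed

lemma sets_sphere_uniform [simp, measurable_cong]: "sets sphere_uniform = sets borel"
  by (simp add: sphere_uniform_def)

lemma prob_space_sphere_uniform: "prob_space sphere_uniform"
  unfolding sphere_uniform_def
  by (rule prob_space.prob_space_distr[OF prob_space_uniform_ball]) measurable

lemma distr_uniform_ball_orthogonal_transformation:
  fixes f :: "real^'n \<Rightarrow> real^'n"
  assumes f: "orthogonal_transformation f"
  defines "U \<equiv> uniform_measure lborel (ball 0 1)"
  shows "distr U borel f = U"
proof (rule measure_eqI)
  have [measurable]: "f \<in> borel_measurable borel"
    by (rule borel_measurable_orthogonal_transformation[OF f])
  show "sets (distr U borel f) = sets U"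
    by (simp add: U_def)
  fix A assume "A \<in> sets (distr U borel f)"
  then have [measurable]: "A \<in> sets borel"
    by simp
  have [measurable]: "f -` A \<in> sets borel"
    using measurable_sets_borel by measurable
  have "f -` A \<inter> ball 0 1 = f -` (A \<inter> ball 0 1)"
    using f by (auto simp: orthogonal_transformation_norm)
  then have "emeasure lborel (f -` A \<inter> ball 0 1) = emeasure (distr lborel borel f) (A \<inter> ball 0 1)"
    by (simp add: emeasure_distr)
  then have "emeasure lborel (f -` A \<inter> ball 0 1) = emeasure lborel (A \<inter> ball 0 1)"
    by (simp add: distr_lborel_orthogonal_transformation[OF f])
  then show "emeasure (distr U borel f) A = emeasure U A"
    by (simp add: U_def emeasure_distr emeasure_uniform_measure Int_commute)
qed

lemma distr_sphere_uniform_orthogonal_transformation: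
  fixes f :: "real^'n \<Rightarrow> real^'n"
  assumes f: "orthogonal_transformation f"
  shows "distr sphere_uniform borel f = sphere_uniform"
proof -
  let ?U = "uniform_measure lborel (ball (0::real^'n) 1)" and ?normalize = "\<lambda>x::real^'n. x /\<^sub>R norm x"
  have [measurable]: "f \<in> borel_measurable borel"
    by (rule borel_measurable_orthogonal_transformation[OF f])
  have "f \<circ> ?normalize = ?normalize \<circ> f"
    using f by (auto simp: fun_eq_iff orthogonal_transformation_norm orthogonal_transformation_linear linear_scale)
  then have "distr sphere_uniform borel f = distr (distr ?U borel f) borel ?normalize"
    unfolding sphere_uniform_def by (simp add: distr_distr)
  then show ?thesis
    by (simp add: distr_uniform_ball_orthogonal_transformation[OF f] sphere_uniform_def)
qed

lemma integral_sphere_uniform_orthogonal_transformation: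
  fixes f :: "real^'n \<Rightarrow> real^'n" and h :: "real^'n \<Rightarrow> real"
  assumes f: "orthogonal_transformation f" and [measurable]: "h \<in> borel_measurable borel"
  shows "(\<integral>x. h (f x) \<partial>sphere_uniform) = (\<integral>x. h x \<partial>sphere_uniform)"
proof -
  have [measurable]: "f \<in> borel_measurable borel"
    by (rule borel_measurable_orthogonal_transformation[OF f])
  have "(\<integral>x. h (f x) \<partial>sphere_uniform) = (\<integral>x. h x \<partial>distr sphere_uniform borel f)"
    by (rule integral_distr[symmetric]) simp_all
  then show ?thesis
    by (simp add: distr_sphere_uniform_orthogonal_transformation[OF f])
qed

lemma AE_sphere_uniform_not_in_cone:
  fixes A :: "'a::euclidean_space set"
  assumes [measurable]: "A \<in> sets borel" and "negligible A"
    and cone: "\<And>x. x \<noteq> 0 \<Longrightarrow> x /\<^sub>R norm x \<in> A \<Longrightarrow> x \<in> A"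
  shows "AE c in sphere_uniform. c \<notin> A \<and> norm c = 1"
proof -
  have "insert 0 A \<in> null_sets lebesgue"
    using \<open>negligible A\<close> negligible_insert negligible_iff_null_sets by blast
  then have "insert 0 A \<in> null_sets lborel"
    using null_sets_completion_iff[of "insert 0 A" lborel] by simp
  then have "AE x in lborel. x \<notin> insert 0 A"
    by (rule AE_not_in)
  then have "AE x in lborel. x \<in> ball 0 1 \<longrightarrow> x /\<^sub>R norm x \<notin> A \<and> norm (x /\<^sub>R norm x) = 1"
    by eventually_elim (auto intro: cone)
  then have "AE x in uniform_measure lborel (ball 0 1). x /\<^sub>R norm x \<notin> A \<and> norm (x /\<^sub>R norm x) = 1"
    by (rule AE_uniform_measureI[rotated]) simp
  then show ?thesis
    unfolding sphere_uniform_def by (subst AE_distr_iff) auto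
qed

lemma AE_sphere_uniform_norm: "AE c in sphere_uniform. norm c = 1"
  using AE_sphere_uniform_not_in_cone[of "{}"] by simp

section \<open>Second moments on the sphere\<close>

lemma integrable_sphere_uniform_bounded:
  fixes h :: "'a::euclidean_space \<Rightarrow> real"
  assumes [measurable]: "h \<in> borel_measurable borel" and "\<And>c. norm c = 1 \<Longrightarrow> \<bar>h c\<bar> \<le> B"
  shows "integrable sphere_uniform h"
proof -
  interpret prob_space "sphere_uniform :: 'a measure"
    by (rule prob_space_sphere_uniform)
  show ?thesis
  proof (rule integrable_const_bound)
    show "AE c in sphere_uniform. norm (h c) \<le> B"
      using AE_sphere_uniform_norm by eventually_elim (simp add: assms(2))
  qed simp
qed

lemma integrable_sphere_uniform_inner_sq: "integrable sphere_uniform (\<lambda>c. (c \<bullet> a)\<^sup>2)"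
proof (rule integrable_sphere_uniform_bounded)
  fix c :: 'a assume "norm c = 1"
  then have "\<bar>c \<bullet> a\<bar>\<^sup>2 \<le> (norm a)\<^sup>2"
    using Cauchy_Schwarz_ineq2[of c a] by (intro power_mono) simp_all
  then show "\<bar>(c \<bullet> a)\<^sup>2\<bar> \<le> (norm a)\<^sup>2"
    by simp
qed simp

lemma integral_sphere_uniform_inner_sq:
  fixes a :: "real^'n"
  assumes "norm a = 1"
  shows "(\<integral>c. (c \<bullet> a)\<^sup>2 \<partial>sphere_uniform) = 1 / real CARD('n)"
proof -
  let ?S = "sphere_uniform :: (real^'n) measure"
  interpret prob_space ?S
    by (rule prob_space_sphere_uniform)
  define X where "X = (\<integral>c. (c \<bullet> a)\<^sup>2 \<partial>?S)"
  have coordinate: "(\<integral>c. (c $ k)\<^sup>2 \<partial>?S) = X" for k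
  proof -
    obtain f where f: "orthogonal_transformation f" "f a = axis k (1::real)"
      using orthogonal_transformation_exists_1[OF assms norm_axis_1[of k]] by blast
    have "(\<integral>c. (c $ k)\<^sup>2 \<partial>?S) = (\<integral>c. (f c \<bullet> axis k 1)\<^sup>2 \<partial>?S)"
      using integral_sphere_uniform_orthogonal_transformation[OF f(1), of "\<lambda>c. (c \<bullet> axis k 1)\<^sup>2"]
      by (simp add: inner_axis)
    also have "\<dots> = X"
      using f(1) unfolding X_def by (simp add: orthogonal_transformation_def flip: f(2))
    finally show ?thesis .
  qed
  have "real CARD('n) * X = (\<Sum>k\<in>UNIV. (\<integral>c. (c $ k)\<^sup>2 \<partial>?S))"
    by (simp add: coordinate)
  also have "\<dots> = (\<integral>c. (\<Sum>k\<in>UNIV. (c $ k)\<^sup>2) \<partial>?S)"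
    using integrable_sphere_uniform_inner_sq[of "axis k (1::real)" for k]
    by (intro Bochner_Integration.integral_sum[symmetric]) (simp add: inner_axis)
  also have "\<dots> = (\<integral>c. 1 \<partial>?S)"
  proof (rule integral_cong_AE)
    show "AE c in ?S. (\<Sum>k\<in>UNIV. (c $ k)\<^sup>2) = 1"
      using AE_sphere_uniform_norm
      by eventually_elim (simp add: norm_eq_1 inner_vec_def power2_eq_square)
  qed simp_all
  also have "\<dots> = 1"
    using prob_space by simp
  finally show ?thesis
    by (simp add: X_def field_simps)
qed

lemma integral_periodic_offset:
  fixes f :: "real \<Rightarrow> 'a::banach"
  assumes "continuous_on UNIV f" and periodic: "\<And>x. f (x + p) = f x" and "0 \<le> a" "a \<le> p"
  shows "integral {a..a + p} f = integral {0..p} f"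
proof -
  have integrable: "f integrable_on {s..t}" for s t
    by (meson assms(1) continuous_on_subset integrable_continuous_real subset_UNIV)
  have "integral {p..a + p} f = integral {0..a} f"
    using integral_shift_real_ivl[where f=f and a=p and b="a + p" and c=p] by (simp add: periodic)
  then have "integral {a..a + p} f = integral {a..p} f + integral {0..a} f"
    using Henstock_Kurzweil_Integration.integral_combine[OF _ _ integrable, of a p "a + p"] assms by simp
  also have "\<dots> = integral {0..p} f"
    using Henstock_Kurzweil_Integration.integral_combine[OF _ _ integrable, of 0 a p] assms
    by (simp add: add.commute)
  finally show ?thesis .
qed

lemma has_integral_abs_sin_double: "((\<lambda>t. \<bar>sin (2 * t)\<bar>) has_integral 2) {0..pi}"
proof -
  have "((\<lambda>t. sin (2 * t)) has_integral (- cos (2 * (pi / 2)) / 2) - (- cos (2 * 0) / 2)) {0..pi / 2}"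
    by (intro fundamental_theorem_of_calculus)
       (auto intro!: derivative_eq_intros simp flip: has_real_derivative_iff_has_vector_derivative)
  then have "((\<lambda>t. sin (2 * t)) has_integral 1) {0..pi / 2}"
    by simp
  then have "((\<lambda>t. \<bar>sin (2 * t)\<bar>) has_integral 1) {0..pi / 2}"
    by (rule has_integral_eq[rotated]) (simp add: sin_ge_zero)
  moreover have "((\<lambda>t. - sin (2 * t)) has_integral (cos (2 * pi) / 2) - (cos (2 * (pi / 2)) / 2)) {pi / 2..pi}"
    by (intro fundamental_theorem_of_calculus)
       (auto intro!: derivative_eq_intros simp flip: has_real_derivative_iff_has_vector_derivative)
  then have "((\<lambda>t. - sin (2 * t)) has_integral 1) {pi / 2..pi}"
    by simp
  then have "((\<lambda>t. \<bar>sin (2 * t)\<bar>) has_integral 1) {pi / 2..pi}"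
  proof (rule has_integral_eq[rotated])
    fix t assume "t \<in> {pi / 2..pi}"
    then have "0 \<le> sin (2 * t - pi)"
      by (intro sin_ge_zero) auto
    then show "- sin (2 * t) = \<bar>sin (2 * t)\<bar>"
      by (simp add: sin_diff)
  qed
  ultimately show ?thesis
    using has_integral_combine[of 0 "pi / 2" pi] by fastforce
qed

lemma has_integral_abs_sin_double_offset:
  assumes "0 \<le> \<phi>" "\<phi> \<le> 2 * pi"
  shows "((\<lambda>t. \<bar>sin (2 * t + \<phi>)\<bar>) has_integral 2) {0..pi}"
proof -
  let ?g = "\<lambda>t. \<bar>sin (2 * t)\<bar>"
  have "integral {0..pi} (\<lambda>t. ?g (t + \<phi> / 2)) = integral {\<phi> / 2..\<phi> / 2 + pi} ?g"
    using integral_shift_real_ivl[where f="?g" and a="\<phi> / 2" and b="\<phi> / 2 + pi" and c="\<phi> / 2"]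
    by simp
  also have "\<dots> = integral {0..pi} ?g"
    using assms
    by (intro integral_periodic_offset continuous_intros) (simp_all add: distrib_left sin_periodic)
  also have "\<dots> = 2"
    by (rule integral_unique[OF has_integral_abs_sin_double])
  finally have "integral {0..pi} (\<lambda>t. \<bar>sin (2 * t + \<phi>)\<bar>) = 2"
    by (simp add: distrib_left)
  moreover have "(\<lambda>t. \<bar>sin (2 * t + \<phi>)\<bar>) integrable_on {0..pi}"
    by (intro integrable_continuous_real continuous_intros)
  ultimately show ?thesis
    using integrable_integral by metis
qed

lemma has_integral_abs_rotated_product:
  fixes \<alpha> \<beta> :: real
  shows "((\<lambda>t. \<bar>(cos t * \<alpha> - sin t * \<beta>) * (sin t * \<alpha> + cos t * \<beta>)\<bar>) has_integral \<alpha>\<^sup>2 + \<beta>\<^sup>2) {0..pi}"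
proof (cases "\<alpha>\<^sup>2 + \<beta>\<^sup>2 = 0")
  case True
  then show ?thesis
    by (simp add: sum_power2_eq_zero_iff)
next
  case False
  define R where "R = \<alpha>\<^sup>2 + \<beta>\<^sup>2"
  have R: "R > 0"
    using False sum_power2_ge_zero[of \<alpha> \<beta>] unfolding R_def by linarith
  \<comment> \<open>by the double-angle formulas the product is \<open>R / 2\<close> times a sine with the phase \<open>\<phi>\<close> of the
    unit vector \<open>(\<alpha>\<^sup>2 - \<beta>\<^sup>2, 2 \<alpha> \<beta>) / R\<close>\<close>
  have "(\<alpha>\<^sup>2 - \<beta>\<^sup>2)\<^sup>2 + (2 * \<alpha> * \<beta>)\<^sup>2 = R\<^sup>2"
    unfolding R_def by (simp add: power2_eq_square algebra_simps)
  then have "((\<alpha>\<^sup>2 - \<beta>\<^sup>2) / R)\<^sup>2 + (2 * \<alpha> * \<beta> / R)\<^sup>2 = 1"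
    using R by (simp add: power_divide add_divide_distrib[symmetric])
  then obtain \<phi> where \<phi>: "0 \<le> \<phi>" "\<phi> < 2 * pi"
      "cos \<phi> = (\<alpha>\<^sup>2 - \<beta>\<^sup>2) / R" "sin \<phi> = 2 * \<alpha> * \<beta> / R"
    using sincos_total_2pi by metis
  have "(cos t * \<alpha> - sin t * \<beta>) * (sin t * \<alpha> + cos t * \<beta>)
      = ((\<alpha>\<^sup>2 - \<beta>\<^sup>2) * (2 * sin t * cos t) + 2 * \<alpha> * \<beta> * ((cos t)\<^sup>2 - (sin t)\<^sup>2)) / 2" for t
    by (simp add: power2_eq_square algebra_simps)
  also have "\<dots> t = ((\<alpha>\<^sup>2 - \<beta>\<^sup>2) * sin (2 * t) + 2 * \<alpha> * \<beta> * cos (2 * t)) / 2" for t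
    by (simp only: sin_double cos_double)
  also have "\<dots> t = R / 2 * sin (2 * t + \<phi>)" for t
    using R by (simp add: \<phi> sin_add field_simps)
  finally have product: "(cos t * \<alpha> - sin t * \<beta>) * (sin t * \<alpha> + cos t * \<beta>) = R / 2 * sin (2 * t + \<phi>)" for t .
  have abs_product:
      "\<bar>(cos t * \<alpha> - sin t * \<beta>) * (sin t * \<alpha> + cos t * \<beta>)\<bar> = R / 2 * \<bar>sin (2 * t + \<phi>)\<bar>" for t
    unfolding product using R by (simp add: abs_mult)
  have "((\<lambda>t. R / 2 * \<bar>sin (2 * t + \<phi>)\<bar>) has_integral R / 2 * 2) {0..pi}"
    using \<phi> by (intro has_integral_mult_right has_integral_abs_sin_double_offset) simp_all
  then show ?thesis
    unfolding abs_product R_def[symmetric] by simp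
qed

lemma set_integral_Icc_swap:
  fixes G :: "real \<Rightarrow> 'a::euclidean_space \<Rightarrow> real"
  assumes M: "prob_space M" "sets M = sets borel"
    and cont: "continuous_on UNIV (\<lambda>(t, c). G t c)" and bounded: "AE c in M. \<forall>t. \<bar>G t c\<bar> \<le> B"
  shows "(\<integral>c. (LINT t:{a..b}|lborel. G t c) \<partial>M) = (LINT t:{a..b}|lborel. (\<integral>c. G t c \<partial>M))"
proof -
  define T where "T = restrict_space lborel {a..b}"
  have T: "finite_measure T"
    unfolding T_def using emeasure_lborel_cbox_finite[of a b]
    by (intro finite_measureI) (simp add: emeasure_restrict_space)
  interpret TM: pair_sigma_finite T M
    using T M(1) by (intro pair_sigma_finite.intro finite_measure.sigma_finite_measure prob_space_imp_sigma_finite)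
  interpret TM: finite_measure "T \<Otimes>\<^sub>M M"
    using T M(1) by (intro finite_measure_pair_measure) (simp_all add: prob_space_def)
  have "(\<lambda>x. x) \<in> T \<rightarrow>\<^sub>M borel"
    unfolding T_def by (rule measurable_restrict_space1) simp
  then have "(\<lambda>p. (fst p, snd p)) \<in> T \<Otimes>\<^sub>M M \<rightarrow>\<^sub>M borel \<Otimes>\<^sub>M borel"
    using measurable_ident_sets[OF M(2)]
    by (intro measurable_Pair measurable_compose[OF measurable_fst] measurable_compose[OF measurable_snd])
  moreover have "(\<lambda>(t, c). G t c) \<in> borel_measurable (borel \<Otimes>\<^sub>M borel)"
    using borel_measurable_continuous_onI[OF cont] by (simp add: borel_prod)
  ultimately have "(\<lambda>p. (\<lambda>(t, c). G t c) (fst p, snd p)) \<in> borel_measurable (T \<Otimes>\<^sub>M M)"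
    by (rule measurable_compose)
  then have [measurable]: "(\<lambda>(t, c). G t c) \<in> borel_measurable (T \<Otimes>\<^sub>M M)"
    by simp
  have "AE p in T \<Otimes>\<^sub>M M. norm ((\<lambda>(t, c). G t c) p) \<le> B"
    using bounded by (intro TM.AE_pair_measure) (measurable, auto elim!: eventually_mono)
  then have "integrable (T \<Otimes>\<^sub>M M) (\<lambda>(t, c). G t c)"
    by (intro TM.integrable_const_bound[where B=B]) simp_all
  then have "(\<integral>c. (\<integral>t. G t c \<partial>T) \<partial>M) = (\<integral>t. (\<integral>c. G t c \<partial>M) \<partial>T)"
    by (rule TM.Fubini_integral)
  then show ?thesis
    by (simp add: T_def set_lebesgue_integral_def integral_restrict_space)
qed

text \<open>For orthonormal \<open>a\<close>, \<open>b\<close>: the rotation by the angle \<open>t\<close> in the plane spanned by \<open>a\<close>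
  and \<open>b\<close>, fixing its orthogonal complement.\<close>

definition plane_rotation :: "'a::real_inner \<Rightarrow> 'a \<Rightarrow> real \<Rightarrow> 'a \<Rightarrow> 'a" where
  "plane_rotation a b t x = x + ((cos t - 1) * (x \<bullet> a) - sin t * (x \<bullet> b)) *\<^sub>R a
                                + (sin t * (x \<bullet> a) + (cos t - 1) * (x \<bullet> b)) *\<^sub>R b"

context
  fixes a b :: "'a::real_inner"
  assumes orthonormal: "a \<bullet> a = 1" "b \<bullet> b = 1" "a \<bullet> b = 0"
begin

lemma inner_plane_rotation_left:
  "plane_rotation a b t x \<bullet> a = cos t * (x \<bullet> a) - sin t * (x \<bullet> b)"
  "plane_rotation a b t x \<bullet> b = sin t * (x \<bullet> a) + cos t * (x \<bullet> b)"
  using orthonormal by (simp_all add: plane_rotation_def inner_add_left inner_commute[of b a] algebra_simps)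

lemma orthogonal_transformation_plane_rotation: "orthogonal_transformation (plane_rotation a b t)"
  unfolding orthogonal_transformation_def
proof (intro conjI allI)
  show "linear (plane_rotation a b t)"
    by (rule linearI) (simp_all add: plane_rotation_def inner_add_left algebra_simps scaleR_add_left)
  fix v w :: 'a
  define p where "p x = (cos t - 1) * (x \<bullet> a) - sin t * (x \<bullet> b)" for x
  define r where "r x = sin t * (x \<bullet> a) + (cos t - 1) * (x \<bullet> b)" for x
  have rotation: "plane_rotation a b t x = x + p x *\<^sub>R a + r x *\<^sub>R b" for x
    by (simp add: plane_rotation_def p_def r_def)
  have "plane_rotation a b t v \<bullet> plane_rotation a b t w
      = v \<bullet> w + p w * (v \<bullet> a) + r w * (v \<bullet> b) + p v * (w \<bullet> a) + p v * p w + r v * (w \<bullet> b) + r v * r w"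
    using orthonormal unfolding rotation
    by (simp add: inner_add_left inner_add_right inner_commute[of a w] inner_commute[of b w] inner_commute[of b a]
        algebra_simps)
  also have "\<dots> = v \<bullet> w + ((v \<bullet> a) * (w \<bullet> a) + (v \<bullet> b) * (w \<bullet> b)) * ((sin t)\<^sup>2 + (cos t)\<^sup>2 - 1)"
    unfolding p_def r_def
    by (simp add: power2_eq_square algebra_simps del: sin_cos_squared_add sin_cos_squared_add2 sin_cos_squared_add3)
  finally show "plane_rotation a b t v \<bullet> plane_rotation a b t w = v \<bullet> w"
    by (simp only: sin_cos_squared_add diff_self mult_zero_right add_0_right)
qed

end

lemma abs_inner_mult_abs_inner_le:
  fixes x a b :: "'a::real_inner"
  assumes "norm x = 1" "norm a = 1" "norm b = 1"
  shows "\<bar>x \<bullet> a\<bar> * \<bar>x \<bullet> b\<bar> \<le> 1"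
  using Cauchy_Schwarz_ineq2[of x a] Cauchy_Schwarz_ineq2[of x b] assms by (simp add: mult_le_one)

lemma integral_sphere_uniform_abs_inner_mult:
  fixes a b :: "real^'n"
  assumes orthonormal: "a \<bullet> a = 1" "b \<bullet> b = 1" "a \<bullet> b = 0"
  shows "(\<integral>c. \<bar>c \<bullet> a\<bar> * \<bar>c \<bullet> b\<bar> \<partial>sphere_uniform) = 2 / (pi * real CARD('n))"
proof -
  interpret prob_space "sphere_uniform :: (real^'n) measure"
    by (rule prob_space_sphere_uniform)
  define I where "I = (\<integral>c. \<bar>c \<bullet> a\<bar> * \<bar>c \<bullet> b\<bar> \<partial>(sphere_uniform :: (real^'n) measure))"
  define G where "G t c = \<bar>(cos t * (c \<bullet> a) - sin t * (c \<bullet> b)) * (sin t * (c \<bullet> a) + cos t * (c \<bullet> b))\<bar>"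
    for t and c :: "real^'n"
  have rotation: "orthogonal_transformation (plane_rotation a b t)" for t
    by (rule orthogonal_transformation_plane_rotation[OF orthonormal])
  have G_rotation: "G t c = \<bar>plane_rotation a b t c \<bullet> a\<bar> * \<bar>plane_rotation a b t c \<bullet> b\<bar>" for t c
    by (simp add: G_def inner_plane_rotation_left[OF orthonormal] abs_mult)
  have "(\<integral>c. G t c \<partial>sphere_uniform) = I" for t
    unfolding G_rotation I_def
    by (rule integral_sphere_uniform_orthogonal_transformation[OF rotation]) simp
  then have "(LINT t:{0..pi}|lborel. (\<integral>c. G t c \<partial>sphere_uniform)) = pi * I"
    by (simp add: set_integral_const)
  also have "(LINT t:{0..pi}|lborel. (\<integral>c. G t c \<partial>sphere_uniform)) =
      (\<integral>c. (LINT t:{0..pi}|lborel. G t c) \<partial>sphere_uniform)"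
  proof (rule set_integral_Icc_swap[symmetric])
    show "continuous_on UNIV (\<lambda>(t, c). G t c)"
      unfolding G_def case_prod_beta by (intro continuous_intros)
    show "AE c in sphere_uniform. \<forall>t. \<bar>G t c\<bar> \<le> 1"
      using AE_sphere_uniform_norm
      by eventually_elim (simp add: G_rotation abs_inner_mult_abs_inner_le
          orthogonal_transformation_norm[OF rotation] orthonormal norm_eq_1)
  qed (simp_all add: prob_space_sphere_uniform)
  also have "\<dots> = (\<integral>c. (c \<bullet> a)\<^sup>2 + (c \<bullet> b)\<^sup>2 \<partial>sphere_uniform)"
  proof (intro Bochner_Integration.integral_cong refl)
    fix c :: "real^'n"
    have "set_integrable lborel {0..pi} (\<lambda>t. G t c)"
      unfolding set_integrable_def G_def
      by (intro borel_integrable_compact compact_Icc continuous_intros)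
    then have "(LINT t:{0..pi}|lborel. G t c) = integral {0..pi} (\<lambda>t. G t c)"
      by (rule set_borel_integral_eq_integral(2))
    also have "\<dots> = (c \<bullet> a)\<^sup>2 + (c \<bullet> b)\<^sup>2"
      unfolding G_def by (rule integral_unique[OF has_integral_abs_rotated_product])
    finally show "(LINT t:{0..pi}|lborel. G t c) = (c \<bullet> a)\<^sup>2 + (c \<bullet> b)\<^sup>2" .
  qed
  also have "\<dots> = 2 / real CARD('n)"
    using orthonormal integrable_sphere_uniform_inner_sq[of a] integrable_sphere_uniform_inner_sq[of b]
    by (simp add: integral_sphere_uniform_inner_sq norm_eq_1)
  finally show ?thesis
    by (simp add: I_def field_simps)
qed

section \<open>Gram-Schmidt orthonormalization\<close>

definition gram_schmidt_residual :: "(nat \<Rightarrow> 'a::real_inner) \<Rightarrow> nat \<Rightarrow> 'a" where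
  "gram_schmidt_residual w k = w k - (\<Sum>j<k. (w k \<bullet> gram_schmidt_list w k ! j) *\<^sub>R gram_schmidt_list w k ! j)"

lemma length_gram_schmidt_list [simp]: "length (gram_schmidt_list w k) = k"
  by (induction k) (simp_all add: Let_def)

lemma nth_gram_schmidt_list_Suc:
  "i < k \<Longrightarrow> gram_schmidt_list w (Suc k) ! i = gram_schmidt_list w k ! i"
  by (simp add: Let_def nth_append)

lemma nth_gram_schmidt_list_last:
  "gram_schmidt_list w (Suc k) ! k = gram_schmidt_residual w k /\<^sub>R norm (gram_schmidt_residual w k)"
  by (simp add: Let_def nth_append gram_schmidt_residual_def sum_list_sum_nth atLeast0LessThan)

declare gram_schmidt_list.simps(2) [simp del]

lemma gram_schmidt_list_cong:
  "(\<And>j. j < k \<Longrightarrow> w j = w' j) \<Longrightarrow> gram_schmidt_list w k = gram_schmidt_list w' k"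
  by (induction k) (simp_all add: gram_schmidt_list.simps Let_def)

lemma gram_schmidt_list_orthogonal_transformation:
  assumes f: "orthogonal_transformation f"
  shows "gram_schmidt_list (\<lambda>i. f (w i)) k = map f (gram_schmidt_list w k)"
proof (induction k)
  case (Suc k)
  have "linear f" "f x \<bullet> f y = x \<bullet> y" for x y
    using f by (simp_all add: orthogonal_transformation_def)
  then have residual: "f (w k) - sum_list (map (\<lambda>u. (f (w k) \<bullet> u) *\<^sub>R u) (map f us))
      = f (w k - sum_list (map (\<lambda>u. (w k \<bullet> u) *\<^sub>R u) us))" for us
    by (induction us) (simp_all add: linear_diff linear_add linear_scale)
  show ?case
    unfolding gram_schmidt_list.simps Let_def Suc.IH residual
    using f by (simp add: orthogonal_transformation_norm linear_scale orthogonal_transformation_linear)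
qed simp

lemma gram_schmidt_list_orthonormal:
  assumes "\<And>k. k < q \<Longrightarrow> gram_schmidt_residual w k \<noteq> 0" and "i < q" "j < q"
  shows "gram_schmidt_list w q ! i \<bullet> gram_schmidt_list w q ! j = (if i = j then 1 else 0)"
  using assms
proof (induction q arbitrary: i j)
  case (Suc k)
  let ?u = "\<lambda>i. gram_schmidt_list w k ! i" and ?y = "gram_schmidt_residual w k"
  have IH: "?u i \<bullet> ?u j = (if i = j then 1 else 0)" if "i < k" "j < k" for i j
    using Suc that by simp
  have orthogonal: "?y \<bullet> ?u j = 0" if "j < k" for j
  proof -
    have "(\<Sum>i<k. (w k \<bullet> ?u i) *\<^sub>R ?u i) \<bullet> ?u j = (\<Sum>i<k. (w k \<bullet> ?u i) * (?u i \<bullet> ?u j))"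
      by (simp add: inner_sum_left)
    also have "\<dots> = (\<Sum>i<k. if i = j then w k \<bullet> ?u j else 0)"
      using IH that by (intro sum.cong) auto
    finally have "(\<Sum>i<k. (w k \<bullet> ?u i) *\<^sub>R ?u i) \<bullet> ?u j = w k \<bullet> ?u j"
      using that by simp
    then show ?thesis
      using that by (simp add: gram_schmidt_residual_def inner_diff_left)
  qed
  have "?y \<noteq> 0"
    using Suc.prems by simp
  then have "gram_schmidt_list w (Suc k) ! k \<bullet> gram_schmidt_list w (Suc k) ! k = 1"
    unfolding nth_gram_schmidt_list_last by (simp add: dot_square_norm power2_eq_square)
  moreover have "gram_schmidt_list w (Suc k) ! k \<bullet> gram_schmidt_list w (Suc k) ! j = 0" if "j < k" for j
    using orthogonal[OF that] unfolding nth_gram_schmidt_list_last nth_gram_schmidt_list_Suc[OF that] by simp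
  ultimately show ?case
    using Suc.prems IH by (cases "i = k"; cases "j = k")
      (auto simp: nth_gram_schmidt_list_Suc inner_commute less_Suc_eq)
qed simp

lemma gram_schmidt_residual_nonzero:
  assumes "w k \<notin> span (set (gram_schmidt_list w k))"
  shows "gram_schmidt_residual w k \<noteq> 0"
proof
  assume "gram_schmidt_residual w k = 0"
  then have "w k = (\<Sum>j<k. (w k \<bullet> gram_schmidt_list w k ! j) *\<^sub>R gram_schmidt_list w k ! j)"
    by (simp add: gram_schmidt_residual_def)
  also have "\<dots> \<in> span (set (gram_schmidt_list w k))"
    by (intro span_sum span_scale span_base) simp
  finally show False
    using assms by contradiction
qed

lemma measurable_gram_schmidt_list_nth:
  fixes w :: "'b \<Rightarrow> nat \<Rightarrow> 'a::euclidean_space"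
  assumes "\<And>j. j < k \<Longrightarrow> (\<lambda>x. w x j) \<in> borel_measurable M" and "i < k"
  shows "(\<lambda>x. gram_schmidt_list (w x) k ! i) \<in> borel_measurable M"
  using assms
proof (induction k arbitrary: i)
  case (Suc k)
  have IH: "(\<lambda>x. gram_schmidt_list (w x) k ! i) \<in> borel_measurable M" if "i < k" for i
    using Suc that by simp
  have "(\<lambda>x. gram_schmidt_residual (w x) k) \<in> borel_measurable M"
    unfolding gram_schmidt_residual_def using Suc.prems IH by measurable
  then have last: "(\<lambda>x. gram_schmidt_list (w x) (Suc k) ! k) \<in> borel_measurable M"
    unfolding nth_gram_schmidt_list_last by measurable
  show ?case
  proof (cases "i < k")
    case True
    then show ?thesis
      using IH[OF True] by (simp only: nth_gram_schmidt_list_Suc)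
  next
    case False
    then show ?thesis
      using last Suc.prems by (simp add: less_Suc_eq)
  qed
qed simp

section \<open>Alignment with the sign vector\<close>

definition sign_alignment :: "nat \<Rightarrow> 'a::real_inner \<Rightarrow> (nat \<Rightarrow> 'a) \<Rightarrow> real" where
  "sign_alignment q g w = (let u = (\<lambda>i. gram_schmidt_list w q ! i);
                              v = (\<Sum>i<q. sgn (g \<bullet> u i) *\<^sub>R u i)
                          in ((g /\<^sub>R norm g) \<bullet> (v /\<^sub>R norm v))\<^sup>2)"

lemma abs_sign_alignment_le: "\<bar>sign_alignment q g w\<bar> \<le> 1"
proof -
  have "\<bar>(x /\<^sub>R norm x) \<bullet> (y /\<^sub>R norm y)\<bar> \<le> 1" for x y :: 'a
    using Cauchy_Schwarz_ineq2[of "x /\<^sub>R norm x" "y /\<^sub>R norm y"]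
    by (cases "x = 0"; cases "y = 0") simp_all
  then show ?thesis
    unfolding sign_alignment_def Let_def by (simp add: abs_square_le_1)
qed

lemma sign_alignment_normalize:
  "g \<noteq> 0 \<Longrightarrow> sign_alignment q (g /\<^sub>R norm g) w = sign_alignment q g w"
  by (simp add: sign_alignment_def sgn_mult)

lemma sign_alignment_cong:
  "(\<And>j. j < q \<Longrightarrow> w j = w' j) \<Longrightarrow> sign_alignment q g w = sign_alignment q g w'"
  unfolding sign_alignment_def using gram_schmidt_list_cong[of q w w'] by simp

lemma sign_alignment_orthogonal_transformation:
  assumes f: "orthogonal_transformation f"
  shows "sign_alignment q (f g) (\<lambda>i. f (w i)) = sign_alignment q g w"
proof -
  have lin: "linear f" and inner: "f x \<bullet> f y = x \<bullet> y" for x y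
    using f by (simp_all add: orthogonal_transformation_def)
  define u where "u i = gram_schmidt_list w q ! i" for i
  define v where "v = (\<Sum>i<q. sgn (g \<bullet> u i) *\<^sub>R u i)"
  have "(\<Sum>i<q. sgn (f g \<bullet> gram_schmidt_list (\<lambda>i. f (w i)) q ! i) *\<^sub>R gram_schmidt_list (\<lambda>i. f (w i)) q ! i) = f v"
    unfolding v_def gram_schmidt_list_orthogonal_transformation[OF f]
    by (simp add: linear_sum[OF lin] linear_scale[OF lin] inner u_def)
  then show ?thesis
    unfolding sign_alignment_def Let_def u_def[symmetric] v_def[symmetric]
    by (simp add: inner orthogonal_transformation_norm[OF f] flip: linear_scale[OF lin])
qed

lemma sign_alignment_eq_sum_abs_inner:
  assumes orthonormal: "\<And>i j. i < q \<Longrightarrow> j < q \<Longrightarrow>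
      gram_schmidt_list w q ! i \<bullet> gram_schmidt_list w q ! j = (if i = j then 1 else 0)"
    and nonzero: "\<And>i. i < q \<Longrightarrow> g \<bullet> gram_schmidt_list w q ! i \<noteq> 0" and "norm g = 1"
  shows "sign_alignment q g w = (\<Sum>i<q. \<bar>g \<bullet> gram_schmidt_list w q ! i\<bar>)\<^sup>2 / q"
proof -
  define u where "u i = gram_schmidt_list w q ! i" for i
  define s where "s i = sgn (g \<bullet> u i)" for i
  define v where "v = (\<Sum>i<q. s i *\<^sub>R u i)"
  have gv: "g \<bullet> v = (\<Sum>i<q. \<bar>g \<bullet> u i\<bar>)"
    by (simp add: v_def s_def inner_sum_right abs_sgn mult.commute)
  have "v \<bullet> v = (\<Sum>i<q. \<Sum>j<q. s i * s j * (u j \<bullet> u i))"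
    by (simp add: v_def inner_sum_left inner_sum_right sum_distrib_left mult.assoc)
  also have "\<dots> = (\<Sum>i<q. s i * s i)"
    by (intro sum.cong refl) (simp add: orthonormal u_def if_distrib sum.delta cong: if_cong)
  also have "\<dots> = (\<Sum>i<q. 1)"
    using nonzero by (intro sum.cong refl) (simp add: s_def u_def sgn_if)
  finally have "(norm v)\<^sup>2 = q"
    by (simp add: power2_norm_eq_inner)
  moreover have "sign_alignment q g w = (g \<bullet> v)\<^sup>2 / (norm v)\<^sup>2"
    using \<open>norm g = 1\<close>
    by (simp add: sign_alignment_def u_def[symmetric] s_def[symmetric] v_def[symmetric]
        power_divide power_mult_distrib divide_inverse power_inverse)
  ultimately show ?thesis
    by (simp add: gv u_def)
qed

lemma measurable_sign_alignment:
  fixes w :: "'b \<Rightarrow> nat \<Rightarrow> 'a::euclidean_space"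
  assumes "\<And>j. j < q \<Longrightarrow> (\<lambda>x. w x j) \<in> borel_measurable M" and "g \<in> borel_measurable M"
  shows "(\<lambda>x. sign_alignment q (g x) (w x)) \<in> borel_measurable M"
  unfolding sign_alignment_def Let_def
  by (intro borel_measurable_power borel_measurable_inner borel_measurable_scaleR borel_measurable_sum
      measurable_compose[OF _ borel_measurable_sgn] measurable_compose[OF _ borel_measurable_norm]
      borel_measurable_inverse measurable_gram_schmidt_list_nth assms)
    simp_all

abbreviation sphere_uniform_tuple :: "nat \<Rightarrow> (nat \<Rightarrow> 'a::euclidean_space) measure" where
  "sphere_uniform_tuple q \<equiv> PiM {..<q} (\<lambda>_. sphere_uniform)"

lemma prob_space_sphere_uniform_tuple: "prob_space (sphere_uniform_tuple q)"
  by (intro prob_space_PiM prob_space_sphere_uniform)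

lemma product_prob_space_sphere_uniform: "product_prob_space (\<lambda>_. sphere_uniform)"
  by (intro product_prob_spaceI prob_space_sphere_uniform)

lemma measurable_sphere_uniform_tuple_component:
  "j < q \<Longrightarrow> (\<lambda>w. w j) \<in> borel_measurable (sphere_uniform_tuple q)"
  using measurable_component_singleton[of j "{..<q}" "\<lambda>_. sphere_uniform"]
  by (simp add: measurable_cong_sets[OF refl sets_sphere_uniform])

lemma integral_sphere_uniform_tuple_orthogonal_transformation:
  fixes f :: "real^'n \<Rightarrow> real^'n" and H :: "(nat \<Rightarrow> real^'n) \<Rightarrow> real"
  assumes f: "orthogonal_transformation f" and H: "H \<in> borel_measurable (sphere_uniform_tuple q)"
  shows "(\<integral>w. H (\<lambda>i\<in>{..<q}. f (w i)) \<partial>sphere_uniform_tuple q) = (\<integral>w. H w \<partial>sphere_uniform_tuple q)"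
proof -
  have f_measurable: "f \<in> sphere_uniform \<rightarrow>\<^sub>M sphere_uniform"
    using borel_measurable_orthogonal_transformation[OF f]
    by (simp add: measurable_cong_sets[OF sets_sphere_uniform sets_sphere_uniform])
  have "distr sphere_uniform sphere_uniform f = sphere_uniform"
    using distr_sphere_uniform_orthogonal_transformation[OF f] by (simp cong: distr_cong)
  then have distr_compose: "distr (sphere_uniform_tuple q) (sphere_uniform_tuple q) (compose {..<q} f) = sphere_uniform_tuple q"
    using distr_PiM_finite_prob_space'[of "{..<q}" "\<lambda>_. sphere_uniform" "\<lambda>_. sphere_uniform" f] f_measurable
    by (simp add: prob_space_sphere_uniform)
  have "compose {..<q} f \<in> sphere_uniform_tuple q \<rightarrow>\<^sub>M sphere_uniform_tuple q"
    unfolding compose_def using f_measurable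
    by (intro measurable_restrict measurable_compose[OF measurable_component_singleton]) auto
  then have "(\<integral>w. H w \<partial>distr (sphere_uniform_tuple q) (sphere_uniform_tuple q) (compose {..<q} f))
      = (\<integral>w. H (compose {..<q} f w) \<partial>sphere_uniform_tuple q)"
    using H by (rule integral_distr)
  then show ?thesis
    by (simp add: distr_compose compose_def)
qed

lemma AE_sphere_uniform_not_in_span:
  fixes L :: "'a::euclidean_space list"
  assumes "length L < DIM('a)"
  shows "AE c in sphere_uniform. c \<notin> span (set L)"
proof -
  have "dim (span (set L)) \<le> length L"
    using dim_le_card'[of "set L"] card_length[of L] by simp
  then have "negligible (span (set L))"
    using assms by (intro negligible_lowdim) simp
  moreover have "x \<in> span (set L)" if "x \<noteq> 0" "x /\<^sub>R norm x \<in> span (set L)" for x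
    using span_scale[OF that(2), of "norm x"] that(1) by simp
  ultimately have "AE c in sphere_uniform. c \<notin> span (set L) \<and> norm c = 1"
    by (intro AE_sphere_uniform_not_in_cone borel_closed closed_subspace subspace_span)
  then show ?thesis
    by eventually_elim simp
qed

lemma AE_sphere_uniform_inner_nonzero:
  fixes u :: "'a::euclidean_space"
  assumes "u \<noteq> 0"
  shows "AE c in sphere_uniform. c \<bullet> u \<noteq> 0"
proof -
  have "AE c in sphere_uniform. c \<notin> {x. u \<bullet> x = 0} \<and> norm c = 1"
    using assms by (intro AE_sphere_uniform_not_in_cone borel_closed closed_hyperplane negligible_hyperplane) auto
  then show ?thesis
    by eventually_elim (simp add: inner_commute)
qed

lemma AE_gram_schmidt_residual_nonzero:
  assumes "q \<le> DIM('a::euclidean_space)"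
  shows "AE w in (sphere_uniform_tuple q :: (nat \<Rightarrow> 'a) measure). \<forall>k<q. gram_schmidt_residual w k \<noteq> 0"
proof -
  interpret product_prob_space "\<lambda>_. sphere_uniform :: 'a measure"
    by (rule product_prob_space_sphere_uniform)
  have "AE w in sphere_uniform_tuple q. gram_schmidt_residual w k \<noteq> (0::'a)" if k: "k < q" for k
  proof -
    define B where "B = {w \<in> space (sphere_uniform_tuple q). gram_schmidt_residual w k = (0::'a)}"
    have "(\<lambda>w. gram_schmidt_residual w k) \<in> borel_measurable (sphere_uniform_tuple q :: (nat \<Rightarrow> 'a) measure)"
      unfolding gram_schmidt_residual_def using k
      by (intro borel_measurable_diff borel_measurable_sum borel_measurable_scaleR borel_measurable_inner
          measurable_gram_schmidt_list_nth measurable_sphere_uniform_tuple_component) auto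
    then have B: "B \<in> sets (sphere_uniform_tuple q)"
      unfolding B_def by measurable
    have "{..<q} = insert k ({..<q} - {k})"
      using k by auto
    then have emeasure_B: "emeasure (sphere_uniform_tuple q) B
        = (\<integral>\<^sup>+ x. (\<integral>\<^sup>+ y. indicator B (x(k := y)) \<partial>sphere_uniform) \<partial>PiM ({..<q} - {k}) (\<lambda>_. sphere_uniform))"
      using B by (simp add: product_nn_integral_insert[symmetric] flip: nn_integral_indicator)
    \<comment> \<open>the new vector \<open>y\<close> almost surely avoids the span of the previously orthonormalized ones\<close>
    have slice_null: "(\<integral>\<^sup>+ y. indicator B (x(k := y)) \<partial>sphere_uniform) = 0" for x :: "nat \<Rightarrow> 'a"
    proof -
      have "AE y in sphere_uniform. y \<notin> span (set (gram_schmidt_list x k))"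
        using k assms by (intro AE_sphere_uniform_not_in_span) simp
      then have "AE y in sphere_uniform. indicator B (x(k := y)) = (0::ennreal)"
      proof eventually_elim
        case (elim y)
        have "gram_schmidt_list (x(k := y)) k = gram_schmidt_list x k"
          by (rule gram_schmidt_list_cong) simp
        then show ?case
          using gram_schmidt_residual_nonzero[of "x(k := y)" k] elim by (simp add: B_def)
      qed
      then show ?thesis
        by (simp add: nn_integral_cong_AE)
    qed
    then have "B \<in> null_sets (sphere_uniform_tuple q)"
      using B emeasure_B by (simp add: null_sets_def)
    then show ?thesis
      by (rule AE_I') (auto simp: B_def)
  qed
  then have "AE w in sphere_uniform_tuple q. \<forall>k\<in>{..<q}. gram_schmidt_residual w k \<noteq> (0::'a)"
    by (intro AE_finite_allI) auto
  then show ?thesis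
    by (simp add: Ball_def)
qed

lemma integral_sphere_uniform_sum_abs_inner_sq:
  fixes u :: "nat \<Rightarrow> real^'n"
  assumes orthonormal: "\<And>i j. i < q \<Longrightarrow> j < q \<Longrightarrow> u i \<bullet> u j = (if i = j then 1 else 0)"
  shows "(\<integral>c. (\<Sum>i<q. \<bar>c \<bullet> u i\<bar>)\<^sup>2 \<partial>sphere_uniform)
      = q * (1 / real CARD('n) + (real q - 1) * (2 / (pi * real CARD('n))))"
proof -
  define A where "A = 1 / real CARD('n)"
  define C where "C = 2 / (pi * real CARD('n))"
  define E where "E i j = (\<integral>c. \<bar>c \<bullet> u i\<bar> * \<bar>c \<bullet> u j\<bar> \<partial>(sphere_uniform :: (real^'n) measure))" for i j
  have unit: "norm (u i) = 1" if "i < q" for i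
    using orthonormal[OF that that] by (simp add: norm_eq_1)
  have integrable: "integrable sphere_uniform (\<lambda>c::real^'n. \<bar>c \<bullet> u i\<bar> * \<bar>c \<bullet> u j\<bar>)" if "i < q" "j < q" for i j
    using that unit by (intro integrable_sphere_uniform_bounded[where B=1]) (simp_all add: abs_inner_mult_abs_inner_le)
  have row: "(\<Sum>j<q. E i j) = A + (real q - 1) * C" if "i < q" for i
  proof -
    have "E i j = C + (if j = i then A - C else 0)" if "j < q" for j
    proof (cases "j = i")
      case True
      have "(\<lambda>c. \<bar>c \<bullet> u i\<bar> * \<bar>c \<bullet> u i\<bar>) = (\<lambda>c. (c \<bullet> u i)\<^sup>2)"
        by (simp add: fun_eq_iff abs_mult_self_eq power2_eq_square)
      then show ?thesis
        using True integral_sphere_uniform_inner_sq[OF unit[OF \<open>i < q\<close>]] by (simp add: E_def A_def)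
    next
      case False
      then show ?thesis
        using \<open>i < q\<close> \<open>j < q\<close> orthonormal by (simp add: E_def C_def integral_sphere_uniform_abs_inner_mult)
    qed
    then have "(\<Sum>j<q. E i j) = (\<Sum>j<q. C + (if j = i then A - C else 0))"
      by (intro sum.cong) simp_all
    also have "\<dots> = q * C + (A - C)"
      using that by (simp add: sum.distrib)
    finally show ?thesis
      by (simp add: algebra_simps)
  qed
  have "(\<integral>c. (\<Sum>i<q. \<bar>c \<bullet> u i\<bar>)\<^sup>2 \<partial>sphere_uniform)
      = (\<integral>c. (\<Sum>i<q. \<Sum>j<q. \<bar>c \<bullet> u i\<bar> * \<bar>c \<bullet> u j\<bar>) \<partial>sphere_uniform)"
    by (simp add: power2_eq_square sum_product)
  also have "\<dots> = (\<Sum>i<q. (\<integral>c. (\<Sum>j<q. \<bar>c \<bullet> u i\<bar> * \<bar>c \<bullet> u j\<bar>) \<partial>sphere_uniform))"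
    by (rule Bochner_Integration.integral_sum) (auto intro!: Bochner_Integration.integrable_sum integrable)
  also have "\<dots> = (\<Sum>i<q. \<Sum>j<q. E i j)"
    unfolding E_def by (intro sum.cong refl Bochner_Integration.integral_sum) (auto intro: integrable)
  also have "\<dots> = q * (A + (real q - 1) * C)"
    by (simp add: row)
  finally show ?thesis
    by (simp add: A_def C_def)
qed

lemma integral_sign_alignment_orthogonal_transformation:
  fixes f :: "real^'n \<Rightarrow> real^'n"
  assumes f: "orthogonal_transformation f"
  shows "(\<integral>w. sign_alignment q (f c) w \<partial>sphere_uniform_tuple q)
      = (\<integral>w. sign_alignment q c w \<partial>sphere_uniform_tuple q)"
proof -
  have "(\<integral>w. sign_alignment q (f c) w \<partial>sphere_uniform_tuple q)
      = (\<integral>w. sign_alignment q (f c) (\<lambda>i\<in>{..<q}. f (w i)) \<partial>sphere_uniform_tuple q)"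
    using measurable_sign_alignment[of q "\<lambda>w. w" "sphere_uniform_tuple q" "\<lambda>_. f c"]
      measurable_sphere_uniform_tuple_component
    by (intro integral_sphere_uniform_tuple_orthogonal_transformation[OF f, symmetric]) simp
  also have "\<dots> = (\<integral>w. sign_alignment q (f c) (\<lambda>i. f (w i)) \<partial>sphere_uniform_tuple q)"
    by (intro Bochner_Integration.integral_cong refl sign_alignment_cong) simp
  also have "\<dots> = (\<integral>w. sign_alignment q c w \<partial>sphere_uniform_tuple q)"
    by (simp add: sign_alignment_orthogonal_transformation[OF f])
  finally show ?thesis .
qed

lemma integral_sphere_uniform_sign_alignment:
  fixes w :: "nat \<Rightarrow> real^'n"
  assumes nondegenerate: "\<forall>k<q. gram_schmidt_residual w k \<noteq> 0" and "1 \<le> q"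
  shows "(\<integral>c. sign_alignment q c w \<partial>sphere_uniform) = 1 / real CARD('n) * (2 / pi * (real q - 1) + 1)"
proof -
  define u where "u i = gram_schmidt_list w q ! i" for i
  have orthonormal: "u i \<bullet> u j = (if i = j then 1 else 0)" if "i < q" "j < q" for i j
    unfolding u_def using nondegenerate that by (intro gram_schmidt_list_orthonormal) auto
  have "u i \<noteq> 0" if "i < q" for i
    using orthonormal[OF that that] by auto
  then have "AE c in sphere_uniform. \<forall>i\<in>{..<q}. c \<bullet> u i \<noteq> 0"
    by (intro AE_finite_allI AE_sphere_uniform_inner_nonzero) auto
  then have "AE c in sphere_uniform. sign_alignment q c w = (\<Sum>i<q. \<bar>c \<bullet> u i\<bar>)\<^sup>2 / q"
    using AE_sphere_uniform_norm
    by eventually_elim (simp add: u_def sign_alignment_eq_sum_abs_inner orthonormal[unfolded u_def])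
  then have "(\<integral>c. sign_alignment q c w \<partial>sphere_uniform)
      = (\<integral>c. (\<Sum>i<q. \<bar>c \<bullet> u i\<bar>)\<^sup>2 / q \<partial>sphere_uniform)"
    by (intro integral_cong_AE measurable_sign_alignment) simp_all
  also have "\<dots> = (1 / real CARD('n) + (real q - 1) * (2 / (pi * real CARD('n))))"
    using \<open>1 \<le> q\<close> by (simp add: integral_sphere_uniform_sum_abs_inner_sq[OF orthonormal])
  finally show ?thesis
    by (simp add: field_simps)
qed

theorem integral_sign_alignment:
  fixes g :: "real^'n"
  assumes "1 \<le> q" "q \<le> CARD('n)" "g \<noteq> 0"
  shows "(\<integral>w. sign_alignment q g w \<partial>sphere_uniform_tuple q) = 1 / real CARD('n) * (2 / pi * (real q - 1) + 1)"
proof -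
  let ?S = "sphere_uniform :: (real^'n) measure"
    and ?P = "sphere_uniform_tuple q :: (nat \<Rightarrow> real^'n) measure"
  interpret S: prob_space ?S
    by (rule prob_space_sphere_uniform)
  interpret P: prob_space ?P
    by (rule prob_space_sphere_uniform_tuple)
  interpret SP: pair_prob_space ?S ?P
    by unfold_locales
  have "(\<lambda>p. sign_alignment q (fst p) (snd p)) \<in> borel_measurable (?S \<Otimes>\<^sub>M ?P)"
    by (intro measurable_sign_alignment measurable_compose[OF measurable_fst] measurable_ident_sets
        measurable_compose[OF measurable_snd measurable_sphere_uniform_tuple_component]) simp_all
  then have measurable: "(\<lambda>(c, w). sign_alignment q c w) \<in> borel_measurable (?S \<Otimes>\<^sub>M ?P)"
    by (simp add: case_prod_beta')
  define \<Phi> where "\<Phi> c = (\<integral>w. sign_alignment q c w \<partial>?P)" for c :: "real^'n"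
  have rotation_invariant: "\<Phi> c = \<Phi> (g /\<^sub>R norm g)" if "norm c = 1" for c
  proof -
    obtain f where "orthogonal_transformation f" "f (g /\<^sub>R norm g) = c"
      using orthogonal_transformation_exists_1[of "g /\<^sub>R norm g" c] \<open>g \<noteq> 0\<close> \<open>norm c = 1\<close> by auto
    then show ?thesis
      unfolding \<Phi>_def using integral_sign_alignment_orthogonal_transformation by metis
  qed
  have "\<Phi> g = (\<integral>c. \<Phi> (g /\<^sub>R norm g) \<partial>?S)"
    using \<open>g \<noteq> 0\<close> S.prob_space by (simp add: \<Phi>_def sign_alignment_normalize)
  also have "\<dots> = (\<integral>c. \<Phi> c \<partial>?S)"
    using AE_sphere_uniform_norm rotation_invariant P.borel_measurable_lebesgue_integral[OF measurable]
    by (intro integral_cong_AE) (auto simp: \<Phi>_def elim!: eventually_mono)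
  also have "\<dots> = (\<integral>w. (\<integral>c. sign_alignment q c w \<partial>?S) \<partial>?P)"
    unfolding \<Phi>_def using measurable abs_sign_alignment_le
    by (intro SP.Fubini_integral[symmetric] SP.integrable_const_bound[where B=1]) (auto split: prod.splits)
  also have "\<dots> = (\<integral>w. 1 / real CARD('n) * (2 / pi * (real q - 1) + 1) \<partial>?P)"
  proof (rule integral_cong_AE)
    have "AE w in ?P. \<forall>k<q. gram_schmidt_residual w k \<noteq> 0"
      using assms(2) by (intro AE_gram_schmidt_residual_nonzero) simp
    then show "AE w in ?P. (\<integral>c. sign_alignment q c w \<partial>?S) = 1 / real CARD('n) * (2 / pi * (real q - 1) + 1)"
      by eventually_elim (rule integral_sphere_uniform_sign_alignment[OF _ assms(1)])
  qed (use S.borel_measurable_lebesgue_integral[OF measurable_pair_swap[OF measurable]] in simp_all)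
  finally show ?thesis
    using P.prob_space by (simp add: \<Phi>_def)
qed

theorem lemmaA5:
  fixes g :: "real ^ 'd" and q :: nat
  assumes "1 \<le> q" and "q \<le> CARD('d)" and "g \<noteq> 0"
  shows "(\<integral>w. (let u = (\<lambda>i. gram_schmidt_list w q ! i);
                      v = (\<Sum>i<q. sgn (g \<bullet> u i) *\<^sub>R u i)
                  in ((g /\<^sub>R norm g) \<bullet> (v /\<^sub>R norm v))\<^sup>2)
           \<partial>(PiM {..<q} (\<lambda>_. sphere_uniform)))
         = (1 / real CARD('d)) * ((2 / pi) * (real q - 1) + 1)"
  using integral_sign_alignment[OF assms] unfolding sign_alignment_def .

end
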